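(* For any time $t_0>0$, $$\bigcup_{x\in[0,\infty)}\Delta(x,t_0)=\{(x,t): x\in[0,\infty),\ 0\le t\le t_0\}.$$
   Context: Standing assumptions: $u_0,u_b:[0,\infty)\to\mathbb{R}$ bounded measurable with $u_b>0$; $\rho_0,\rho_b:[0,\infty)\to(0,\infty)$ positive locally bounded measurable. For $x,t,y,\tau\ge0$: $F(y,x,t)=\int_0^y[tu_0(\eta)+\eta-x]\rho_0(\eta)\,d\eta$, $G(\tau,x,t)=\int_0^\tau[x-u_b(\eta)(t-\eta)]\rho_b(\eta)u_b(\eta)\,d\eta$, $F(x,t)=\min_{y\ge0}F(y,x,t)$, $G(x,t)=\min_{\tau\ge0}G(\tau,x,t)$ (minima attained); $y_*\le y^*$ smallest/largest minimizers of $F(\cdot,x,t)$, $\tau_*\le\tau^*$ those of $G(\cdot,x,t)$. Characteristic triangle $\Delta(x,t)$ ($x\ge0,t>0$): (1) if $x>0$, $F(x,t)<G(x,t)$: convex hull of $(x,t),(y_*(x,t),0),(y^*(x,t),0)$; (2) if $F(x,t)>G(x,t)$: convex hull of $(x,t),(0,\tau_*(x,t)),(0,\tau^*(x,t))$; (3) if $F(x,t)=G(x,t)$: convex hull of $(x,t),(y^*(x,t),0),(0,\tau^*(x,t)),(0,0)$; (4) if $x=0$, $F(0,t)<G(0,t)$: convex hull of $(0,t),(0,0),(y^*(0,t),0)$. *)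

theory Defs
  imports "HOL-Analysis.Analysis"
begin

definition Fint :: "(real \<Rightarrow> real) \<Rightarrow> (real \<Rightarrow> real) \<Rightarrow> real \<Rightarrow> real \<Rightarrow> real \<Rightarrow> real" where
  "Fint u0 rho0 y x t = integral {0..y} (\<lambda>\<eta>. (t * u0 \<eta> + \<eta> - x) * rho0 \<eta>)"

definition Gint :: "(real \<Rightarrow> real) \<Rightarrow> (real \<Rightarrow> real) \<Rightarrow> real \<Rightarrow> real \<Rightarrow> real \<Rightarrow> real" where
  "Gint ub rhob \<tau> x t = integral {0..\<tau>} (\<lambda>\<eta>. (x - ub \<eta> * (t - \<eta>)) * rhob \<eta> * ub \<eta>)"

definition Fmin :: "(real \<Rightarrow> real) \<Rightarrow> (real \<Rightarrow> real) \<Rightarrow> real \<Rightarrow> real \<Rightarrow> real" where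
  "Fmin u0 rho0 x t = Inf ((\<lambda>y. Fint u0 rho0 y x t) ` {0..})"

definition Gmin :: "(real \<Rightarrow> real) \<Rightarrow> (real \<Rightarrow> real) \<Rightarrow> real \<Rightarrow> real \<Rightarrow> real" where
  "Gmin ub rhob x t = Inf ((\<lambda>\<tau>. Gint ub rhob \<tau> x t) ` {0..})"

definition Fargmin :: "(real \<Rightarrow> real) \<Rightarrow> (real \<Rightarrow> real) \<Rightarrow> real \<Rightarrow> real \<Rightarrow> real set" where
  "Fargmin u0 rho0 x t = {y. 0 \<le> y \<and> (\<forall>z\<ge>0. Fint u0 rho0 y x t \<le> Fint u0 rho0 z x t)}"

definition Gargmin :: "(real \<Rightarrow> real) \<Rightarrow> (real \<Rightarrow> real) \<Rightarrow> real \<Rightarrow> real \<Rightarrow> real set" where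
  "Gargmin ub rhob x t = {\<tau>. 0 \<le> \<tau> \<and> (\<forall>s\<ge>0. Gint ub rhob \<tau> x t \<le> Gint ub rhob s x t)}"

definition y_lo where "y_lo u0 rho0 x t = Inf (Fargmin u0 rho0 x t)"
definition y_hi where "y_hi u0 rho0 x t = Sup (Fargmin u0 rho0 x t)"
definition tau_lo where "tau_lo ub rhob x t = Inf (Gargmin ub rhob x t)"
definition tau_hi where "tau_hi ub rhob x t = Sup (Gargmin ub rhob x t)"

text \<open>The characteristic triangle Delta(x,t), for x \<ge> 0, t > 0; points are (space, time).\<close>

definition char_triangle ::
  "(real \<Rightarrow> real) \<Rightarrow> (real \<Rightarrow> real) \<Rightarrow> (real \<Rightarrow> real) \<Rightarrow> (real \<Rightarrow> real) \<Rightarrow> real \<Rightarrow> real \<Rightarrow> (real \<times> real) set" where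
  "char_triangle u0 ub rho0 rhob x t =
    (let Fv = Fmin u0 rho0 x t; Gv = Gmin ub rhob x t in
     if 0 < x \<and> Fv < Gv then
       convex hull {(x, t), (y_lo u0 rho0 x t, 0), (y_hi u0 rho0 x t, 0)}
     else if Fv > Gv then
       convex hull {(x, t), (0, tau_lo ub rhob x t), (0, tau_hi ub rhob x t)}
     else if Fv = Gv then
       convex hull {(x, t), (y_hi u0 rho0 x t, 0), (0, tau_hi ub rhob x t), (0, 0)}
     else
       convex hull {(0, t), (0, 0), (y_hi u0 rho0 0 t, 0)})"

end

theory Submission
  imports Defs
begin

text \<open>
  The minimizations over initial points \<open>y \<ge> 0\<close> and over boundary times \<open>\<tau> \<ge> 0\<close> are glued
  into one minimization over \<open>\<sigma> \<in> \<real>\<close> (\<open>\<sigma> = y\<close>, resp. \<open>\<sigma> = -\<tau>\<close>) of a function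
  \<open>A \<sigma> - x * B \<sigma>\<close> with \<open>B\<close> strictly increasing, so the minimizers move to the right as \<open>x\<close>
  grows and their graph is closed. With the base point of \<open>\<sigma>\<close> being \<open>(\<sigma>, 0)\<close> for \<open>\<sigma> \<ge> 0\<close> and
  \<open>(0, -\<sigma>)\<close> for \<open>\<sigma> < 0\<close>, the triangle \<open>\<Delta>(x, t0)\<close> contains the segments from the apex
  \<open>(x, t0)\<close> to the base points of all \<open>\<sigma>\<close> between two minimizers. A point \<open>(a, s)\<close> with
  \<open>s < t0\<close> lies to the left of these segments once \<open>x\<close> is large; unless it already lies in
  \<open>\<Delta>(0, t0)\<close>, the supremum of the apexes with a segment passing to its left is a threshold where
  one-sided limits of minimizers and the intermediate value theorem give a segment through
  \<open>(a, s)\<close>. Conversely, every triangle lies in the strip because its vertices do.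
\<close>

section \<open>Real analysis\<close>

lemma integral_pos_if_pos_inside:
  fixes f :: "real \<Rightarrow> real"
  assumes f: "f integrable_on {c..d}" and "c < d"
    and nonneg: "\<And>x. x \<in> {c..d} \<Longrightarrow> 0 \<le> f x" and pos: "\<And>x. x \<in> {c<..<d} \<Longrightarrow> 0 < f x"
  shows "0 < integral {c..d} f"
proof -
  have "f absolutely_integrable_on {c..d}"
    by (rule nonnegative_absolutely_integrable_1[OF f nonneg])
  then have int: "integrable lebesgue (\<lambda>x. indicator {c..d} x *\<^sub>R f x)"
    and eq: "integral {c..d} f = integral\<^sup>L lebesgue (\<lambda>x. indicator {c..d} x *\<^sub>R f x)"
    by (simp_all add: set_integrable_def set_lebesgue_integral_eq_integral(2)[symmetric]
        set_lebesgue_integral_def)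
  show ?thesis
  proof (rule ccontr)
    assume "\<not> 0 < integral {c..d} f"
    then have "integral\<^sup>L lebesgue (\<lambda>x. indicator {c..d} x *\<^sub>R f x) = 0"
      using integral_nonneg[OF f nonneg] eq by simp
    then have "AE x in lebesgue. indicator {c..d} x *\<^sub>R f x = 0"
      using integral_nonneg_eq_0_iff_AE[OF int] nonneg by (auto simp: indicator_def)
    then have "AE x in lebesgue. x \<notin> {c<..<d}"
      by eventually_elim (use pos in \<open>fastforce simp: indicator_def\<close>)
    then have "{c<..<d} \<in> null_sets lebesgue"
      by (subst AE_iff_null_sets) auto
    then have "emeasure lebesgue {c<..<d} = 0"
      by auto
    then show False
      using \<open>c < d\<close> emeasure_lborel_Ioo[of c d] by simp
  qed
qed

lemma integral_from_0_nonpos [simp]: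
  fixes f :: "real \<Rightarrow> real"
  shows "y \<le> 0 \<Longrightarrow> integral {0..y} f = 0"
  by (cases "y = 0") simp_all

lemma continuous_on_integral_from_0:
  fixes f :: "real \<Rightarrow> real"
  assumes f: "\<And>y. f integrable_on {0..y}"
  shows "continuous_on UNIV (\<lambda>y. integral {0..y} f)"
proof (rule continuous_at_imp_continuous_on, rule ballI)
  fix z :: real
  define b where "b = \<bar>z\<bar> + 1"
  have "continuous_on {-b..0} (\<lambda>y. integral {0..y} f)"
    by (rule continuous_on_cong[THEN iffD2, OF refl _ continuous_on_const[of _ 0]]) simp
  moreover have "continuous_on {0..b} (\<lambda>y. integral {0..y} f)"
    by (rule indefinite_integral_continuous_1[OF f])
  ultimately have "continuous_on ({-b..0} \<union> {0..b}) (\<lambda>y. integral {0..y} f)"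
    by (rule continuous_on_closed_Un[rotated 2]) auto
  moreover have "{-b..0} \<union> {0..b} = {-b..b}" "z \<in> interior {-b..b}"
    unfolding b_def by auto
  ultimately show "isCont (\<lambda>y. integral {0..y} f) z"
    using continuous_on_interior by fastforce
qed

lemma integral_from_0_strict_mono:
  fixes f :: "real \<Rightarrow> real"
  assumes f: "\<And>y. f integrable_on {0..y}" and "0 \<le> c" "c < d"
    and nonneg: "\<And>x. x \<in> {c..d} \<Longrightarrow> 0 \<le> f x" and pos: "\<And>x. x \<in> {c<..<d} \<Longrightarrow> 0 < f x"
  shows "integral {0..c} f < integral {0..d} f"
proof -
  have "f integrable_on {c..d}"
    by (rule integrable_subinterval_real[OF f[of d]]) (use \<open>0 \<le> c\<close> in auto)
  then have "0 < integral {c..d} f"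
    by (rule integral_pos_if_pos_inside[OF _ \<open>c < d\<close> nonneg pos])
  moreover have "integral {0..c} f + integral {c..d} f = integral {0..d} f"
    using Henstock_Kurzweil_Integration.integral_combine[OF \<open>0 \<le> c\<close> _ f[of d]] \<open>c < d\<close> by simp
  ultimately show ?thesis
    by linarith
qed

lemma set_borel_measurable_imp_lebesgue_on:
  fixes f :: "real \<Rightarrow> real"
  assumes "set_borel_measurable borel S f" "S \<in> sets borel" "T \<subseteq> S"
  shows "f \<in> borel_measurable (lebesgue_on T)"
proof -
  have "(\<lambda>x. indicator S x *\<^sub>R f x) \<in> borel_measurable lebesgue"
    using assms(1) measurable_completion[of _ lborel] by (simp add: set_borel_measurable_def)
  then have "f \<in> borel_measurable (lebesgue_on S)"
    using assms(2) by (subst borel_measurable_restrict_space_iff) auto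
  then show ?thesis
    by (rule measurable_restrict_mono[OF _ assms(3)])
qed

lemma integrable_on_if_measurable_bounded:
  fixes f :: "real \<Rightarrow> real"
  assumes "f \<in> borel_measurable (lebesgue_on {a..b})" "bounded (f ` {a..b})"
  shows "f integrable_on {a..b}"
proof -
  obtain M where "\<forall>x \<in> {a..b}. \<bar>f x\<bar> \<le> M"
    using assms(2) by (auto simp: bounded_real)
  then show ?thesis
    by (intro measurable_bounded_by_integrable_imp_integrable[OF assms(1), of "\<lambda>_. M"]) auto
qed

lemma bounded_mult_comp:
  fixes f g :: "'a \<Rightarrow> real"
  assumes "bounded (f ` S)" "bounded (g ` S)"
  shows "bounded ((\<lambda>x. f x * g x) ` S)"
proof -
  obtain B C where "\<And>x. x \<in> S \<Longrightarrow> \<bar>f x\<bar> \<le> B" "\<And>x. x \<in> S \<Longrightarrow> \<bar>g x\<bar> \<le> C"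
    using assms by (auto simp: bounded_real)
  then have "\<And>x. x \<in> S \<Longrightarrow> \<bar>f x * g x\<bar> \<le> B * C"
    unfolding abs_mult by (meson abs_ge_zero mult_mono order_trans)
  then show ?thesis
    by (auto simp: bounded_real)
qed

lemma Inf_Sup_within_bounds:
  fixes S :: "real set"
  assumes "y \<in> S" "S \<subseteq> {lo..hi}"
  shows "lo \<le> Inf S" "Inf S \<le> y" "y \<le> Sup S" "Sup S \<le> hi"
proof -
  have "bdd_below S" "bdd_above S"
    using assms(2) by (auto intro!: bdd_belowI[of _ lo] bdd_aboveI[of _ hi])
  then show "Inf S \<le> y" "y \<le> Sup S"
    using assms(1) by (auto intro: cInf_lower cSup_upper)
  show "lo \<le> Inf S" "Sup S \<le> hi"
    using assms by (auto intro!: cInf_greatest cSup_least)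
qed

lemma nonneg_argmin_exists:
  fixes f :: "real \<Rightarrow> real"
  assumes cont: "continuous_on UNIV f" and "0 \<le> Y" and inc: "\<And>c d. Y \<le> c \<Longrightarrow> c < d \<Longrightarrow> f c < f d"
  obtains y where "0 \<le> y" "y \<le> Y" "\<And>z. 0 \<le> z \<Longrightarrow> f y \<le> f z"
proof -
  have "continuous_on {0..Y} f"
    using continuous_on_subset[OF cont] by blast
  then obtain y where y: "y \<in> {0..Y}" and min: "\<forall>z\<in>{0..Y}. f y \<le> f z"
    using continuous_attains_inf[of "{0..Y}" f] \<open>0 \<le> Y\<close> by auto
  have "f y \<le> f z" if "0 \<le> z" for z
  proof (cases "z \<le> Y")
    case False
    then have "f Y < f z"
      using inc[of Y z] by simp
    moreover have "f y \<le> f Y"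
      using min \<open>0 \<le> Y\<close> by auto
    ultimately show ?thesis
      by simp
  qed (use min that in auto)
  then show ?thesis
    using that y by auto
qed

lemma nonneg_argmin_le:
  fixes f :: "real \<Rightarrow> real"
  assumes "0 \<le> Y" and inc: "\<And>c d. Y \<le> c \<Longrightarrow> c < d \<Longrightarrow> f c < f d"
    and min: "\<And>z. 0 \<le> z \<Longrightarrow> f y \<le> f z"
  shows "y \<le> Y"
  using inc[of Y y] min[of Y] \<open>0 \<le> Y\<close> by fastforce

section \<open>Segments from an apex to the folded base line\<close>

lemma convex_contains_image_between:
  fixes f :: "real \<Rightarrow> 'a::real_vector"
  assumes "convex H" "linear f" "f p \<in> H" "f q \<in> H" "p \<le> \<sigma>" "\<sigma> \<le> q"
  shows "f \<sigma> \<in> H"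
proof -
  have "f \<sigma> \<in> closed_segment (f p) (f q)"
    using assms(5,6)
    by (auto simp: closed_segment_linear_image[OF assms(2)] closed_segment_eq_real_ivl)
  then show ?thesis
    using convex_contains_segment assms(1,3,4) by blast
qed

definition base_point :: "real \<Rightarrow> real \<times> real" where
  "base_point \<sigma> = (if 0 \<le> \<sigma> then (\<sigma>, 0) else (0, -\<sigma>))"

lemma linear_horizontal: "linear (\<lambda>\<sigma>::real. (\<sigma>, 0::real))"
  and linear_vertical: "linear (\<lambda>\<sigma>::real. (0::real, \<sigma>))"
  by (simp_all add: linear_iff)

text \<open>Up to a positive factor, \<open>side t0 a s x \<sigma>\<close> is \<open>a - h\<close>, where \<open>h\<close> is the abscissa at
  height \<open>s\<close> of the segment from \<open>(x, t0)\<close> to \<open>base_point \<sigma>\<close> (for \<open>-s \<le> \<sigma>\<close>).\<close>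

definition side :: "real \<Rightarrow> real \<Rightarrow> real \<Rightarrow> real \<Rightarrow> real \<Rightarrow> real" where
  "side t0 a s x \<sigma> = a * (t0 + \<sigma>) - x * (s + \<sigma>) + max \<sigma> 0 * (x - a - t0 + s)"

lemma side_of_nonneg: "0 \<le> \<sigma> \<Longrightarrow> side t0 a s x \<sigma> = t0 * a - s * x - (t0 - s) * \<sigma>"
  by (simp add: side_def algebra_simps)

lemma side_of_nonpos: "\<sigma> \<le> 0 \<Longrightarrow> side t0 a s x \<sigma> = a * (t0 + \<sigma>) - x * (s + \<sigma>)"
  by (simp add: side_def max_def)

lemma continuous_on_side [continuous_intros]:
  "continuous_on S f \<Longrightarrow> continuous_on S g \<Longrightarrow> continuous_on S (\<lambda>p. side t0 a s (f p) (g p))"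
  unfolding side_def by (intro continuous_intros)

lemma side_antimono_x:
  assumes "0 \<le> s" "-s \<le> \<sigma>" "x' \<le> x"
  shows "side t0 a s x \<sigma> \<le> side t0 a s x' \<sigma>"
proof (cases "0 \<le> \<sigma>")
  case True
  then show ?thesis
    using assms by (simp add: side_of_nonneg mult_left_mono)
next
  case False
  then show ?thesis
    using assms by (simp add: side_of_nonpos mult_right_mono)
qed

lemma side_nonpos_upward:
  assumes s: "0 \<le> s" "s < t0" and "0 \<le> x" and \<sigma>: "-s \<le> \<sigma>'" "\<sigma>' \<le> \<sigma>"
    and side: "side t0 a s x \<sigma>' \<le> 0"
  shows "side t0 a s x \<sigma> \<le> 0"
proof (cases "0 \<le> \<sigma>'")
  case True
  have "(t0 - s) * \<sigma>' \<le> (t0 - s) * \<sigma>"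
    using s \<sigma> by (simp add: mult_left_mono)
  then show ?thesis
    using side True \<sigma> by (simp add: side_of_nonneg)
next
  case False
  \<comment> \<open>then \<open>a \<le> x\<close>, so \<open>side t0 a s x\<close> is nonincreasing on \<open>[\<sigma>', 0]\<close> as well as on \<open>[0, \<infinity>)\<close>\<close>
  then have "a * (t0 + \<sigma>') \<le> x * (s + \<sigma>')"
    using side by (simp add: side_of_nonpos)
  also have "\<dots> \<le> x * (t0 + \<sigma>')"
    using s \<open>0 \<le> x\<close> by (simp add: mult_left_mono)
  finally have "a \<le> x"
    using s \<sigma> by (simp add: mult_le_cancel_right)
  have "side t0 a s x (min \<sigma> 0) \<le> 0"
  proof -
    have "a * (min \<sigma> 0 - \<sigma>') \<le> x * (min \<sigma> 0 - \<sigma>')"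
      using \<open>a \<le> x\<close> \<sigma> False by (intro mult_right_mono) auto
    then show ?thesis
      using \<open>a * (t0 + \<sigma>') \<le> x * (s + \<sigma>')\<close> by (simp add: side_of_nonpos algebra_simps)
  qed
  moreover have "(t0 - s) * 0 \<le> (t0 - s) * \<sigma>" if "0 \<le> \<sigma>"
    using s that by (intro mult_left_mono) auto
  ultimately show ?thesis
    by (cases "0 \<le> \<sigma>") (simp_all add: side_of_nonneg)
qed

lemma side_nonpos_mono:
  assumes s: "0 \<le> s" "s < t0" and "0 \<le> x'" "x' \<le> x" "-s \<le> \<sigma>'" "\<sigma>' \<le> \<sigma>"
    and "side t0 a s x' \<sigma>' \<le> 0"
  shows "side t0 a s x \<sigma> \<le> 0"
proof -
  have "side t0 a s x \<sigma>' \<le> 0"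
    using side_antimono_x[of s \<sigma>' x' x t0 a] assms by simp
  then show ?thesis
    using side_nonpos_upward[OF s, of x \<sigma>' \<sigma>] assms by simp
qed

lemma side_nonpos_if_large:
  assumes s: "0 \<le> s" "s < t0" and "0 \<le> x" "max 0 (t0 * a / (t0 - s)) \<le> \<sigma>"
  shows "side t0 a s x \<sigma> \<le> 0"
proof -
  have "0 \<le> \<sigma>" "t0 * a \<le> (t0 - s) * \<sigma>"
    using assms by (auto simp: pos_divide_le_eq mult.commute)
  moreover have "0 \<le> s * x"
    using assms by simp
  ultimately show ?thesis
    by (simp add: side_of_nonneg)
qed

lemma side_zero_between:
  assumes s: "0 \<le> s" "s \<le> t0" and "0 \<le> a"
    and \<sigma>1: "\<sigma>1 \<le> -s \<or> 0 \<le> side t0 a s x \<sigma>1" and "\<sigma>1 \<le> \<sigma>2"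
    and \<sigma>2: "-s \<le> \<sigma>2" "side t0 a s x \<sigma>2 \<le> 0"
  obtains \<sigma> where "\<sigma>1 \<le> \<sigma>" "\<sigma> \<le> \<sigma>2" "-s \<le> \<sigma>" "side t0 a s x \<sigma> = 0"
proof -
  define lo where "lo = max \<sigma>1 (-s)"
  have "side t0 a s x (-s) = a * (t0 - s)"
    using s by (simp add: side_of_nonpos)
  then have "0 \<le> side t0 a s x lo"
    using \<sigma>1 s \<open>0 \<le> a\<close> unfolding lo_def by (cases "\<sigma>1 \<le> -s") (simp_all add: max_def)
  moreover have "lo \<le> \<sigma>2"
    using \<open>\<sigma>1 \<le> \<sigma>2\<close> \<sigma>2 by (simp add: lo_def)
  moreover have "continuous_on {lo..\<sigma>2} (side t0 a s x)"
    by (intro continuous_intros)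
  ultimately obtain \<sigma> where "lo \<le> \<sigma>" "\<sigma> \<le> \<sigma>2" "side t0 a s x \<sigma> = 0"
    using IVT2'[of "side t0 a s x" \<sigma>2 0 lo] \<sigma>2(2) by blast
  then show ?thesis
    using that unfolding lo_def by auto
qed

lemma mem_convex_if_side_zero:
  fixes H :: "(real \<times> real) set"
  assumes "convex H" and apex: "(x, t0) \<in> H" and base: "base_point \<sigma> \<in> H"
    and s: "0 \<le> s" "s < t0" and "-s \<le> \<sigma>" and side: "side t0 a s x \<sigma> = 0"
  shows "(a, s) \<in> H"
proof (cases "0 \<le> \<sigma>")
  case True
  then have "(\<sigma>, 0) \<in> H"
    using base by (simp add: base_point_def)
  then have "(1 - s / t0) *\<^sub>R (\<sigma>, 0) + (s / t0) *\<^sub>R (x, t0) \<in> H"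
    by (rule convexD[OF \<open>convex H\<close> _ apex]) (use s in auto)
  moreover have "t0 * a - s * x - (t0 - s) * \<sigma> = 0"
    using side True by (simp add: side_of_nonneg)
  then have "(1 - s / t0) *\<^sub>R (\<sigma>, 0) + (s / t0) *\<^sub>R (x, t0) = (a, s)"
    using s by (simp add: field_simps)
  ultimately show ?thesis
    by simp
next
  case False
  define \<mu> where "\<mu> = (s + \<sigma>) / (t0 + \<sigma>)"
  have "0 < t0 + \<sigma>"
    using \<open>-s \<le> \<sigma>\<close> s by linarith
  then have "0 \<le> \<mu>" "\<mu> \<le> 1"
    using \<open>-s \<le> \<sigma>\<close> s by (simp_all add: \<mu>_def)
  moreover have "(0, -\<sigma>) \<in> H"
    using base False by (simp add: base_point_def)
  ultimately have mem: "(1 - \<mu>) *\<^sub>R (0, -\<sigma>) + \<mu> *\<^sub>R (x, t0) \<in> H"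
    by (intro convexD[OF \<open>convex H\<close> _ apex]) auto
  have \<mu>: "\<mu> * (t0 + \<sigma>) = s + \<sigma>"
    using \<open>0 < t0 + \<sigma>\<close> by (simp add: \<mu>_def)
  have "a * (t0 + \<sigma>) = x * (s + \<sigma>)"
    using side False by (simp add: side_of_nonpos)
  then have "\<mu> * x = a"
    using \<mu> \<open>0 < t0 + \<sigma>\<close> by (simp add: \<mu>_def field_simps)
  moreover have "(1 - \<mu>) * (-\<sigma>) + \<mu> * t0 = \<mu> * (t0 + \<sigma>) - \<sigma>"
    by (simp add: algebra_simps)
  ultimately have "(1 - \<mu>) *\<^sub>R (0, -\<sigma>) + \<mu> *\<^sub>R (x, t0) = (a, s)"
    using \<mu> by simp
  with mem show ?thesis
    by simp
qed

lemma mem_convex_if_side_nonpos_at_0: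
  fixes H :: "(real \<times> real) set"
  assumes "convex H" and apex: "(0, t0) \<in> H" and origin: "(0, 0) \<in> H" and base: "(\<sigma>, 0) \<in> H"
    and s: "0 \<le> s" "s < t0" and "0 \<le> a" "0 \<le> \<sigma>" and side: "side t0 a s 0 \<sigma> \<le> 0"
  shows "(a, s) \<in> H"
proof -
  define w where "w = a * t0 / (t0 - s)"
  have "t0 * a \<le> (t0 - s) * \<sigma>"
    using side \<open>0 \<le> \<sigma>\<close> by (simp add: side_of_nonneg)
  then have "0 \<le> w" "w \<le> \<sigma>"
    using s \<open>0 \<le> a\<close> by (auto simp: w_def field_simps)
  then have "(w, 0) \<in> H"
    using convex_contains_image_between[OF \<open>convex H\<close> linear_horizontal origin base] by simp
  then have "(1 - s / t0) *\<^sub>R (w, 0) + (s / t0) *\<^sub>R (0, t0) \<in> H"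
    by (rule convexD[OF \<open>convex H\<close> _ apex]) (use s in auto)
  moreover have "(1 - s / t0) *\<^sub>R (w, 0) + (s / t0) *\<^sub>R (0, t0) = (a, s)"
    using s by (simp add: w_def field_simps)
  ultimately show ?thesis
    by simp
qed

section \<open>Minimizers of tilted functions\<close>

definition tilted_argmin :: "(real \<Rightarrow> real) \<Rightarrow> (real \<Rightarrow> real) \<Rightarrow> real \<Rightarrow> real set" where
  "tilted_argmin A B x = {\<sigma>. \<forall>z. A \<sigma> - x * B \<sigma> \<le> A z - x * B z}"

lemma tilted_argmin_mono:
  assumes B: "strict_mono B" and "x < x'"
    and m: "\<sigma> \<in> tilted_argmin A B x" and m': "\<sigma>' \<in> tilted_argmin A B x'"
  shows "\<sigma> \<le> \<sigma>'"
proof (rule ccontr)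
  assume "\<not> \<sigma> \<le> \<sigma>'"
  then have "0 < (x' - x) * (B \<sigma> - B \<sigma>')"
    using B \<open>x < x'\<close> by (simp add: strict_mono_less)
  moreover have "A \<sigma> - x * B \<sigma> \<le> A \<sigma>' - x * B \<sigma>'" "A \<sigma>' - x' * B \<sigma>' \<le> A \<sigma> - x' * B \<sigma>"
    using m m' by (auto simp: tilted_argmin_def)
  moreover have "(x' - x) * (B \<sigma> - B \<sigma>') = (x' * B \<sigma> - x * B \<sigma>) - (x' * B \<sigma>' - x * B \<sigma>')"
    by (simp add: algebra_simps)
  ultimately show False
    by linarith
qed

lemma closed_tilted_argmin_graph:
  assumes "continuous_on UNIV A" "continuous_on UNIV B"
  shows "closed {(x, \<sigma>). \<sigma> \<in> tilted_argmin A B x}"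
  unfolding tilted_argmin_def case_prod_unfold mem_Collect_eq
  by (intro closed_Collect_all closed_Collect_le continuous_intros
      continuous_on_compose2[OF assms(1)] continuous_on_compose2[OF assms(2)]) auto

lemma tilted_argmin_limit:
  assumes cont: "continuous_on UNIV A" "continuous_on UNIV B"
    and xs: "xs \<longlonglongrightarrow> x0" and \<sigma>s: "\<And>n. \<sigma>s n \<in> tilted_argmin A B (xs n)"
    and bdd: "bounded (range \<sigma>s)"
    and C: "closed C" "\<And>n. (xs n, \<sigma>s n) \<in> C"
  obtains \<sigma> where "\<sigma> \<in> tilted_argmin A B x0" "(x0, \<sigma>) \<in> C"
proof -
  obtain r l where r: "strict_mono r" and l: "(\<sigma>s \<circ> r) \<longlonglongrightarrow> l"
    using bounded_imp_convergent_subsequence[OF bdd] by blast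
  let ?G = "{(x, \<sigma>). \<sigma> \<in> tilted_argmin A B x} \<inter> C"
  have "closed ?G"
    using closed_tilted_argmin_graph[OF cont] C(1) by (rule closed_Int)
  moreover have "(xs (r n), \<sigma>s (r n)) \<in> ?G" for n
    using \<sigma>s C(2) by simp
  moreover have "(\<lambda>n. (xs (r n), \<sigma>s (r n))) \<longlonglongrightarrow> (x0, l)"
    using tendsto_Pair[OF LIMSEQ_subseq_LIMSEQ[OF xs r] l] by (simp add: o_def)
  ultimately have "(x0, l) \<in> ?G"
    by (rule closed_sequentially)
  then show ?thesis
    using that by blast
qed

definition upward_closed :: "(real \<times> real) set \<Rightarrow> bool" where
  "upward_closed P \<longleftrightarrow> (\<forall>x x' \<sigma> \<sigma>'. (x', \<sigma>') \<in> P \<and> 0 \<le> x' \<and> x' \<le> x \<and> \<sigma>' \<le> \<sigma> \<longrightarrow> (x, \<sigma>) \<in> P)"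

lemma upward_closedD:
  "upward_closed P \<Longrightarrow> (x', \<sigma>') \<in> P \<Longrightarrow> 0 \<le> x' \<Longrightarrow> x' \<le> x \<Longrightarrow> \<sigma>' \<le> \<sigma> \<Longrightarrow> (x, \<sigma>) \<in> P"
  unfolding upward_closed_def by blast

locale tilted_minimization =
  fixes A B :: "real \<Rightarrow> real"
  assumes cont: "continuous_on UNIV A" "continuous_on UNIV B"
    and strict_mono_B: "strict_mono B"
    and nonempty: "0 \<le> x \<Longrightarrow> tilted_argmin A B x \<noteq> {}"
begin

lemma argmin_left_limit:
  assumes "0 < x0"
    and C: "closed C" "\<And>x \<sigma>. 0 < x \<Longrightarrow> x < x0 \<Longrightarrow> \<sigma> \<in> tilted_argmin A B x \<Longrightarrow> (x, \<sigma>) \<in> C"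
  obtains \<sigma> where "\<sigma> \<in> tilted_argmin A B x0" "(x0, \<sigma>) \<in> C"
proof -
  define xs where "xs n = x0 * (1 + - inverse (real (Suc (Suc n))))" for n
  have xs: "0 < xs n" "xs n < x0" for n
    using \<open>0 < x0\<close> inverse_less_1_iff[of "real (Suc (Suc n))"] by (simp_all add: xs_def)
  define \<sigma>s where "\<sigma>s n = (SOME \<sigma>. \<sigma> \<in> tilted_argmin A B (xs n))" for n
  have \<sigma>s: "\<sigma>s n \<in> tilted_argmin A B (xs n)" for n
    unfolding \<sigma>s_def using nonempty[of "xs n"] xs(1)[of n] by (simp add: some_in_eq)
  obtain \<nu>0 \<nu> where \<nu>0: "\<nu>0 \<in> tilted_argmin A B 0" and \<nu>: "\<nu> \<in> tilted_argmin A B x0"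
    using nonempty[of 0] nonempty[of x0] \<open>0 < x0\<close> by fastforce
  have "\<sigma>s n \<in> {\<nu>0..\<nu>}" for n
    using tilted_argmin_mono[OF strict_mono_B xs(1) \<nu>0 \<sigma>s]
      tilted_argmin_mono[OF strict_mono_B xs(2) \<sigma>s \<nu>] by simp
  then have "range \<sigma>s \<subseteq> {\<nu>0..\<nu>}"
    by blast
  then have bdd: "bounded (range \<sigma>s)"
    using bounded_closed_interval bounded_subset by blast
  have lim: "xs \<longlonglongrightarrow> x0"
    unfolding xs_def[abs_def] by (rule LIMSEQ_Suc[OF LIMSEQ_inverse_real_of_nat_add_minus_mult])
  show ?thesis
    by (rule tilted_argmin_limit[OF cont lim \<sigma>s bdd C(1) C(2)[OF xs \<sigma>s]]) (rule that)
qed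

lemma argmin_right_limit:
  assumes "0 \<le> x0" and \<sigma>0: "\<sigma>0 \<in> tilted_argmin A B x0"
    and C: "closed C" "\<And>x \<sigma>. x0 < x \<Longrightarrow> \<sigma> \<in> tilted_argmin A B x \<Longrightarrow> (x, \<sigma>) \<in> C"
  obtains \<sigma> where "\<sigma> \<in> tilted_argmin A B x0" "\<sigma>0 \<le> \<sigma>" "(x0, \<sigma>) \<in> C"
proof -
  define xs where "xs n = x0 + inverse (real (Suc n))" for n
  have xs: "x0 < xs n" "xs n < x0 + 2" for n
    using inverse_le_1_iff[of "real (Suc n)"] by (simp_all add: xs_def)
  define \<sigma>s where "\<sigma>s n = (SOME \<sigma>. \<sigma> \<in> tilted_argmin A B (xs n))" for n
  have \<sigma>s: "\<sigma>s n \<in> tilted_argmin A B (xs n)" for n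
    unfolding \<sigma>s_def using nonempty[of "xs n"] xs(1)[of n] \<open>0 \<le> x0\<close> by (simp add: some_in_eq)
  obtain \<nu> where \<nu>: "\<nu> \<in> tilted_argmin A B (x0 + 2)"
    using nonempty[of "x0 + 2"] \<open>0 \<le> x0\<close> by fastforce
  have lower: "\<sigma>0 \<le> \<sigma>s n" for n
    using tilted_argmin_mono[OF strict_mono_B xs(1) \<sigma>0 \<sigma>s] .
  have "\<sigma>s n \<in> {\<sigma>0..\<nu>}" for n
    using lower tilted_argmin_mono[OF strict_mono_B xs(2) \<sigma>s \<nu>] by simp
  then have "range \<sigma>s \<subseteq> {\<sigma>0..\<nu>}"
    by blast
  then have bdd: "bounded (range \<sigma>s)"
    using bounded_closed_interval bounded_subset by blast
  have lim: "xs \<longlonglongrightarrow> x0"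
    unfolding xs_def[abs_def] by (rule LIMSEQ_inverse_real_of_nat_add)
  have closed: "closed (C \<inter> {p. \<sigma>0 \<le> snd p})"
    using C(1) by (intro closed_Int closed_Collect_le continuous_intros)
  have "(xs n, \<sigma>s n) \<in> C \<inter> {p. \<sigma>0 \<le> snd p}" for n
    using C(2)[OF xs(1) \<sigma>s] lower by simp
  then obtain \<sigma> where "\<sigma> \<in> tilted_argmin A B x0" "(x0, \<sigma>) \<in> C \<inter> {p. \<sigma>0 \<le> snd p}"
    using tilted_argmin_limit[OF cont lim \<sigma>s bdd closed] by blast
  then show ?thesis
    using that by simp
qed

lemma argmin_eventually_ge:
  assumes lower: "\<And>x \<sigma>. 0 \<le> x \<Longrightarrow> \<sigma> \<in> tilted_argmin A B x \<Longrightarrow> L \<le> \<sigma>"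
  obtains X where "\<And>x \<sigma>. X \<le> x \<Longrightarrow> \<sigma> \<in> tilted_argmin A B x \<Longrightarrow> K \<le> \<sigma>"
proof -
  define K' where "K' = max K L"
  have "continuous_on {L..K'} A"
    using continuous_on_subset[OF cont(1)] by blast
  then obtain \<sigma>m where "\<forall>\<sigma> \<in> {L..K'}. A \<sigma>m \<le> A \<sigma>"
    using continuous_attains_inf[of "{L..K'}" A] K'_def by fastforce
  then obtain m where m: "\<And>\<sigma>. \<sigma> \<in> {L..K'} \<Longrightarrow> m \<le> A \<sigma>"
    by blast
  define d where "d = B (K' + 1) - B K'"
  have "0 < d"
    using strict_mono_B unfolding d_def by (simp add: strict_mono_less)
  define X where "X = max 0 ((A (K' + 1) - m + 1) / d)"
  have "K' \<le> \<sigma>" if x: "X \<le> x" and \<sigma>: "\<sigma> \<in> tilted_argmin A B x" for x \<sigma>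
  proof (rule ccontr)
    assume "\<not> K' \<le> \<sigma>"
    then have "B \<sigma> \<le> B K'" "\<sigma> \<le> K'"
      using strict_mono_B by (simp_all add: strict_mono_less_eq)
    have "0 \<le> x" "A (K' + 1) - m + 1 \<le> x * d"
      using x \<open>0 < d\<close> by (auto simp: X_def pos_divide_le_eq mult.commute)
    moreover have "m \<le> A \<sigma>"
      using m lower[OF \<open>0 \<le> x\<close> \<sigma>] \<open>\<sigma> \<le> K'\<close> by simp
    moreover have "x * d \<le> x * (B (K' + 1) - B \<sigma>)"
      using \<open>0 \<le> x\<close> \<open>B \<sigma> \<le> B K'\<close> unfolding d_def by (intro mult_left_mono) simp_all
    moreover have "A \<sigma> - x * B \<sigma> \<le> A (K' + 1) - x * B (K' + 1)"
      using \<sigma> by (simp add: tilted_argmin_def)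
    ultimately show False
      by (simp add: right_diff_distrib)
  qed
  then show ?thesis
    using that K'_def by fastforce
qed

definition outside_abscissae :: "(real \<times> real) set \<Rightarrow> real set" where
  "outside_abscissae P = {x. 0 \<le> x \<and> (\<exists>\<sigma> \<in> tilted_argmin A B x. (x, \<sigma>) \<notin> P)}"

lemma outside_abscissae_downward:
  assumes "upward_closed P" "y \<in> outside_abscissae P" "0 \<le> x" "x < y" "\<sigma> \<in> tilted_argmin A B x"
  shows "(x, \<sigma>) \<notin> P"
proof
  assume "(x, \<sigma>) \<in> P"
  obtain \<sigma>' where \<sigma>': "\<sigma>' \<in> tilted_argmin A B y" "(y, \<sigma>') \<notin> P"
    using \<open>y \<in> outside_abscissae P\<close> by (auto simp: outside_abscissae_def)
  have "\<sigma> \<le> \<sigma>'"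
    by (rule tilted_argmin_mono[OF strict_mono_B \<open>x < y\<close> \<open>\<sigma> \<in> tilted_argmin A B x\<close> \<sigma>'(1)])
  then have "(y, \<sigma>') \<in> P"
    using upward_closedD[OF \<open>upward_closed P\<close> \<open>(x, \<sigma>) \<in> P\<close> \<open>0 \<le> x\<close>] \<open>x < y\<close> by simp
  with \<sigma>'(2) show False
    by contradiction
qed

lemma argmin_outside_at_Sup:
  assumes "closed Q" "- P \<subseteq> Q" "upward_closed P"
    and ne: "outside_abscissae P \<noteq> {}" and bdd: "bdd_above (outside_abscissae P)"
  obtains \<sigma> where "\<sigma> \<in> tilted_argmin A B (Sup (outside_abscissae P))"
    "(Sup (outside_abscissae P), \<sigma>) \<in> Q"
proof -
  define x0 where "x0 = Sup (outside_abscissae P)"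
  have "\<exists>\<sigma> \<in> tilted_argmin A B x0. (x0, \<sigma>) \<in> Q"
  proof (cases "x0 \<in> outside_abscissae P")
    case True
    then show ?thesis
      using \<open>- P \<subseteq> Q\<close> by (auto simp: outside_abscissae_def)
  next
    case False
    obtain y where "y \<in> outside_abscissae P" "y \<le> x0"
      using ne cSup_upper[OF _ bdd] unfolding x0_def by blast
    with False have "0 < x0"
      by (cases "y = x0") (auto simp: outside_abscissae_def)
    have "(x, \<sigma>) \<in> Q" if "0 < x" "x < x0" "\<sigma> \<in> tilted_argmin A B x" for x \<sigma>
    proof -
      obtain y where "y \<in> outside_abscissae P" "x < y"
        using less_cSup_iff[OF ne bdd, of x] \<open>x < x0\<close> unfolding x0_def by blast
      then show ?thesis
        using outside_abscissae_downward[OF \<open>upward_closed P\<close>] that \<open>- P \<subseteq> Q\<close> by fastforce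
    qed
    then show ?thesis
      using argmin_left_limit[OF \<open>0 < x0\<close> \<open>closed Q\<close>] by blast
  qed
  then show ?thesis
    using that unfolding x0_def by blast
qed

text \<open>The threshold abscissa is the supremum of the abscissae that still carry a minimizer
  outside \<open>P\<close>; the two minimizers there are limits from the left and from the right.\<close>

lemma argmin_threshold:
  assumes "closed P" "closed Q" "- P \<subseteq> Q" "upward_closed P"
    and eventually_P: "\<forall>x\<ge>X. \<forall>\<sigma> \<in> tilted_argmin A B x. (x, \<sigma>) \<in> P"
  shows "(\<forall>\<sigma> \<in> tilted_argmin A B 0. (0, \<sigma>) \<in> P) \<or>
    (\<exists>x\<ge>0. \<exists>\<sigma>1 \<in> tilted_argmin A B x. \<exists>\<sigma>2 \<in> tilted_argmin A B x.
      \<sigma>1 \<le> \<sigma>2 \<and> (x, \<sigma>1) \<in> Q \<and> (x, \<sigma>2) \<in> P)"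
proof -
  let ?S = "outside_abscissae P"
  have bdd: "bdd_above ?S"
  proof (rule bdd_aboveI[of _ "max X 0"])
    fix x
    assume "x \<in> ?S"
    then obtain \<sigma> where "\<sigma> \<in> tilted_argmin A B x" "(x, \<sigma>) \<notin> P"
      by (auto simp: outside_abscissae_def)
    then have "\<not> X \<le> x"
      using eventually_P by blast
    then show "x \<le> max X 0"
      by simp
  qed
  show ?thesis
  proof (cases "?S = {}")
    case True
    then show ?thesis
      by (auto simp: outside_abscissae_def)
  next
    case False
    define x0 where "x0 = Sup ?S"
    have "0 \<le> x0"
      using False cSup_upper[OF _ bdd] unfolding x0_def outside_abscissae_def by fastforce
    have inside_right: "(x, \<sigma>) \<in> P" if "x0 < x" "\<sigma> \<in> tilted_argmin A B x" for x \<sigma>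
    proof -
      have "x \<notin> ?S"
        using cSup_upper[OF _ bdd, of x] \<open>x0 < x\<close> unfolding x0_def by linarith
      then show ?thesis
        using that \<open>0 \<le> x0\<close> by (simp add: outside_abscissae_def)
    qed
    obtain \<sigma>1 where \<sigma>1: "\<sigma>1 \<in> tilted_argmin A B x0" "(x0, \<sigma>1) \<in> Q"
      using argmin_outside_at_Sup[OF assms(2-4) False bdd] unfolding x0_def by blast
    obtain \<sigma>2 where "\<sigma>2 \<in> tilted_argmin A B x0" "\<sigma>1 \<le> \<sigma>2" "(x0, \<sigma>2) \<in> P"
      using argmin_right_limit[OF \<open>0 \<le> x0\<close> \<sigma>1(1) \<open>closed P\<close>] inside_right by blast
    then show ?thesis
      using \<open>0 \<le> x0\<close> \<sigma>1 by blast
  qed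
qed

lemma argmin_side_crossing:
  assumes lower: "\<And>x \<sigma>. 0 \<le> x \<Longrightarrow> \<sigma> \<in> tilted_argmin A B x \<Longrightarrow> -t0 \<le> \<sigma>"
    and at_zero: "\<And>\<sigma>. \<sigma> \<in> tilted_argmin A B 0 \<Longrightarrow> \<sigma> < 0 \<Longrightarrow> \<sigma> = -t0"
    and s: "0 \<le> s" "s < t0" and "0 \<le> a"
  shows "(\<exists>\<sigma> \<in> tilted_argmin A B 0. 0 \<le> \<sigma> \<and> side t0 a s 0 \<sigma> \<le> 0) \<or>
    (\<exists>x\<ge>0. \<exists>\<sigma>1 \<in> tilted_argmin A B x. \<exists>\<sigma>2 \<in> tilted_argmin A B x. \<exists>\<sigma>.
      \<sigma>1 \<le> \<sigma> \<and> \<sigma> \<le> \<sigma>2 \<and> -s \<le> \<sigma> \<and> side t0 a s x \<sigma> = 0)"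
proof -
  let ?M = "tilted_argmin A B"
  let ?P = "{(x, \<sigma>). -s \<le> \<sigma> \<and> side t0 a s x \<sigma> \<le> 0}"
  let ?Q = "{(x, \<sigma>). \<sigma> \<le> -s \<or> 0 \<le> side t0 a s x \<sigma>}"
  have closed: "closed ?P" "closed ?Q"
    unfolding case_prod_unfold
    by (intro closed_Collect_conj closed_Collect_disj closed_Collect_le continuous_intros)+
  obtain X where X: "\<And>x \<sigma>. X \<le> x \<Longrightarrow> \<sigma> \<in> ?M x \<Longrightarrow> max 0 (t0 * a / (t0 - s)) \<le> \<sigma>"
    using argmin_eventually_ge[of "-t0" "max 0 (t0 * a / (t0 - s))"] lower by blast
  have "- ?P \<subseteq> ?Q"
    by auto
  moreover have "upward_closed ?P"
    using side_nonpos_mono[OF s] by (auto simp: upward_closed_def)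
  moreover have "\<forall>x \<ge> max X 0. \<forall>\<sigma> \<in> ?M x. (x, \<sigma>) \<in> ?P"
    using side_nonpos_if_large[OF s] X s by fastforce
  ultimately have "(\<forall>\<sigma> \<in> ?M 0. (0, \<sigma>) \<in> ?P) \<or>
    (\<exists>x\<ge>0. \<exists>\<sigma>1 \<in> ?M x. \<exists>\<sigma>2 \<in> ?M x. \<sigma>1 \<le> \<sigma>2 \<and> (x, \<sigma>1) \<in> ?Q \<and> (x, \<sigma>2) \<in> ?P)"
    by (rule argmin_threshold[OF closed])
  then consider "\<forall>\<sigma> \<in> ?M 0. (0, \<sigma>) \<in> ?P"
    | x \<sigma>1 \<sigma>2 where "0 \<le> x" "\<sigma>1 \<in> ?M x" "\<sigma>2 \<in> ?M x" "\<sigma>1 \<le> \<sigma>2" "(x, \<sigma>1) \<in> ?Q" "(x, \<sigma>2) \<in> ?P"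
    by blast
  then show ?thesis
  proof cases
    case 1
    obtain \<sigma> where "\<sigma> \<in> ?M 0"
      using nonempty[of 0] by blast
    moreover have "0 \<le> \<sigma>"
      using 1 at_zero[OF \<open>\<sigma> \<in> ?M 0\<close>] s \<open>\<sigma> \<in> ?M 0\<close> by force
    ultimately show ?thesis
      using 1 by blast
  next
    case 2
    then obtain \<sigma> where "\<sigma>1 \<le> \<sigma>" "\<sigma> \<le> \<sigma>2" "-s \<le> \<sigma>" "side t0 a s x \<sigma> = 0"
      using side_zero_between[of s t0 a \<sigma>1 x \<sigma>2] s \<open>0 \<le> a\<close> by auto
    then show ?thesis
      using 2 by blast
  qed
qed

end

section \<open>The initial and boundary minimization problems\<close>

locale initial_boundary_data =
  fixes u0 ub rho0 rhob :: "real \<Rightarrow> real" and t0 :: real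
  assumes u0_meas: "set_borel_measurable borel {0..} u0"
      and u0_bdd: "\<exists>M. \<forall>x\<ge>0. \<bar>u0 x\<bar> \<le> M"
      and ub_meas: "set_borel_measurable borel {0..} ub"
      and ub_bdd: "\<exists>M. \<forall>x\<ge>0. \<bar>ub x\<bar> \<le> M"
      and ub_pos: "\<forall>x\<ge>0. ub x > 0"
      and rho0_meas: "set_borel_measurable borel {0..} rho0"
      and rho0_pos: "\<forall>x\<ge>0. rho0 x > 0"
      and rho0_locbdd: "\<forall>b\<ge>0. \<exists>M. \<forall>x\<in>{0..b}. \<bar>rho0 x\<bar> \<le> M"
      and rhob_meas: "set_borel_measurable borel {0..} rhob"
      and rhob_pos: "\<forall>x\<ge>0. rhob x > 0"
      and rhob_locbdd: "\<forall>b\<ge>0. \<exists>M. \<forall>x\<in>{0..b}. \<bar>rhob x\<bar> \<le> M"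
      and t0_pos: "t0 > 0"
begin

definition u0_bound :: real where
  "u0_bound = (SOME M. \<forall>x\<ge>0. \<bar>u0 x\<bar> \<le> M)"

lemma abs_u0_le: "0 \<le> x \<Longrightarrow> \<bar>u0 x\<bar> \<le> u0_bound"
  using someI_ex[OF u0_bdd] unfolding u0_bound_def by blast

lemma measurable_data:
  "u0 \<in> borel_measurable (lebesgue_on {0..y})" "rho0 \<in> borel_measurable (lebesgue_on {0..y})"
  "ub \<in> borel_measurable (lebesgue_on {0..y})" "rhob \<in> borel_measurable (lebesgue_on {0..y})"
  by (auto intro: set_borel_measurable_imp_lebesgue_on u0_meas rho0_meas ub_meas rhob_meas)

lemma bounded_data:
  "bounded (u0 ` {0..y})" "bounded (rho0 ` {0..y})"
  "bounded (ub ` {0..y})" "bounded (rhob ` {0..y})"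
proof -
  have "bounded (f ` {0..y})" if "\<forall>b\<ge>0. \<exists>M. \<forall>x\<in>{0..b}. \<bar>f x\<bar> \<le> M" for f :: "real \<Rightarrow> real"
    using that by (cases "0 \<le> y") (auto simp: bounded_real)
  moreover have "\<forall>b\<ge>0. \<exists>M. \<forall>x\<in>{0..b}. \<bar>f x\<bar> \<le> M" if "\<exists>M. \<forall>x\<ge>0. \<bar>f x\<bar> \<le> M" for f :: "real \<Rightarrow> real"
    using that by (meson atLeastAtMost_iff)
  ultimately show "bounded (u0 ` {0..y})" "bounded (rho0 ` {0..y})"
    "bounded (ub ` {0..y})" "bounded (rhob ` {0..y})"
    using u0_bdd rho0_locbdd ub_bdd rhob_locbdd by blast+
qed

lemma integrable_Fint_integrand: "(\<lambda>\<eta>. (t0 * u0 \<eta> + \<eta> - x) * rho0 \<eta>) integrable_on {0..y}"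
proof (rule integrable_on_if_measurable_bounded)
  show "(\<lambda>\<eta>. (t0 * u0 \<eta> + \<eta> - x) * rho0 \<eta>) \<in> borel_measurable (lebesgue_on {0..y})"
    using measurable_data id_borel_measurable_lebesgue_on[unfolded id_def]
    by (intro borel_measurable_times borel_measurable_diff borel_measurable_add
        borel_measurable_const) auto
  have "bounded ((\<lambda>\<eta>. \<eta>) ` {0..y})"
    by simp
  then show "bounded ((\<lambda>\<eta>. (t0 * u0 \<eta> + \<eta> - x) * rho0 \<eta>) ` {0..y})"
    using bounded_data
    by (intro bounded_mult_comp bounded_minus_comp bounded_plus_comp)
      (auto simp: image_constant_conv)
qed

lemma integrable_Gint_integrand: "(\<lambda>\<eta>. (x - ub \<eta> * (t0 - \<eta>)) * rhob \<eta> * ub \<eta>) integrable_on {0..y}"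
proof (rule integrable_on_if_measurable_bounded)
  show "(\<lambda>\<eta>. (x - ub \<eta> * (t0 - \<eta>)) * rhob \<eta> * ub \<eta>) \<in> borel_measurable (lebesgue_on {0..y})"
    using measurable_data id_borel_measurable_lebesgue_on[unfolded id_def]
    by (intro borel_measurable_times borel_measurable_diff borel_measurable_const) auto
  have "bounded ((\<lambda>\<eta>. \<eta>) ` {0..y})"
    by simp
  then show "bounded ((\<lambda>\<eta>. (x - ub \<eta> * (t0 - \<eta>)) * rhob \<eta> * ub \<eta>) ` {0..y})"
    using bounded_data
    by (intro bounded_mult_comp bounded_minus_comp) (auto simp: image_constant_conv)
qed

lemma data_pos: "0 \<le> x \<Longrightarrow> 0 < rho0 x" "0 \<le> x \<Longrightarrow> 0 < ub x" "0 \<le> x \<Longrightarrow> 0 < rhob x"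
  using rho0_pos ub_pos rhob_pos by auto

lemma integrable_rho0: "rho0 integrable_on {0..y}"
  using integrable_diff[OF integrable_Fint_integrand[of 0 y] integrable_Fint_integrand[of 1 y]]
  by (simp add: algebra_simps)

lemma integrable_rhob_ub: "(\<lambda>\<eta>. rhob \<eta> * ub \<eta>) integrable_on {0..y}"
  using integrable_diff[OF integrable_Gint_integrand[of 1 y] integrable_Gint_integrand[of 0 y]]
  by (simp add: algebra_simps)

definition "mass0 y = integral {0..y} rho0"
definition "massb \<tau> = integral {0..\<tau>} (\<lambda>\<eta>. rhob \<eta> * ub \<eta>)"

lemma Fint_eq: "Fint u0 rho0 y x t0 = Fint u0 rho0 y 0 t0 - x * mass0 y"
proof -
  have "(\<lambda>\<eta>. (t0 * u0 \<eta> + \<eta> - x) * rho0 \<eta>) = (\<lambda>\<eta>. (t0 * u0 \<eta> + \<eta> - 0) * rho0 \<eta> - x * rho0 \<eta>)"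
    by (simp add: fun_eq_iff algebra_simps)
  moreover have "integral {0..y} (\<lambda>\<eta>. (t0 * u0 \<eta> + \<eta> - 0) * rho0 \<eta> - x * rho0 \<eta>)
      = integral {0..y} (\<lambda>\<eta>. (t0 * u0 \<eta> + \<eta> - 0) * rho0 \<eta>) - integral {0..y} (\<lambda>\<eta>. x * rho0 \<eta>)"
    by (rule Henstock_Kurzweil_Integration.integral_diff[OF integrable_Fint_integrand
          integrable_on_mult_right[OF integrable_rho0]])
  ultimately show ?thesis
    unfolding Fint_def mass0_def by simp
qed

lemma Gint_eq: "Gint ub rhob \<tau> x t0 = Gint ub rhob \<tau> 0 t0 + x * massb \<tau>"
proof -
  have "(\<lambda>\<eta>. (x - ub \<eta> * (t0 - \<eta>)) * rhob \<eta> * ub \<eta>)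
      = (\<lambda>\<eta>. (0 - ub \<eta> * (t0 - \<eta>)) * rhob \<eta> * ub \<eta> + x * (rhob \<eta> * ub \<eta>))"
    by (simp add: fun_eq_iff algebra_simps)
  moreover have "integral {0..\<tau>} (\<lambda>\<eta>. (0 - ub \<eta> * (t0 - \<eta>)) * rhob \<eta> * ub \<eta> + x * (rhob \<eta> * ub \<eta>))
      = integral {0..\<tau>} (\<lambda>\<eta>. (0 - ub \<eta> * (t0 - \<eta>)) * rhob \<eta> * ub \<eta>)
        + integral {0..\<tau>} (\<lambda>\<eta>. x * (rhob \<eta> * ub \<eta>))"
    by (rule Henstock_Kurzweil_Integration.integral_add[OF integrable_Gint_integrand
          integrable_on_mult_right[OF integrable_rhob_ub]])
  ultimately show ?thesis
    unfolding Gint_def massb_def by simp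
qed

lemma continuous_on_Fint: "continuous_on UNIV (\<lambda>y. Fint u0 rho0 y x t0)"
  unfolding Fint_def by (rule continuous_on_integral_from_0[OF integrable_Fint_integrand])

lemma continuous_on_Gint: "continuous_on UNIV (\<lambda>\<tau>. Gint ub rhob \<tau> x t0)"
  unfolding Gint_def by (rule continuous_on_integral_from_0[OF integrable_Gint_integrand])

lemma mass0_strict_mono:
  assumes "0 \<le> c" "c < d"
  shows "mass0 c < mass0 d"
proof -
  have "0 < rho0 \<eta>" if "c \<le> \<eta>" for \<eta>
    using data_pos(1)[of \<eta>] that assms by simp
  then show ?thesis
    unfolding mass0_def
    by (intro integral_from_0_strict_mono[OF integrable_rho0 assms]) (auto intro: less_imp_le)
qed

lemma massb_strict_mono:
  assumes "0 \<le> c" "c < d"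
  shows "massb c < massb d"
proof -
  have "0 < rhob \<eta> * ub \<eta>" if "c \<le> \<eta>" for \<eta>
    using data_pos(2,3)[of \<eta>] that assms by simp
  then show ?thesis
    unfolding massb_def
    by (intro integral_from_0_strict_mono[OF integrable_rhob_ub assms]) (auto intro: less_imp_le)
qed

lemma mass0_nonpos: "y \<le> 0 \<Longrightarrow> mass0 y = 0"
  and massb_nonpos: "y \<le> 0 \<Longrightarrow> massb y = 0"
  by (simp_all add: mass0_def massb_def)

definition "joint_cost \<sigma> = Fint u0 rho0 \<sigma> 0 t0 + Gint ub rhob (-\<sigma>) 0 t0"
definition "joint_mass \<sigma> = mass0 \<sigma> - massb (-\<sigma>)"

lemma joint_value: "joint_cost \<sigma> - x * joint_mass \<sigma> = Fint u0 rho0 \<sigma> x t0 + Gint ub rhob (-\<sigma>) x t0"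
  unfolding joint_cost_def joint_mass_def Fint_eq[of \<sigma> x] Gint_eq[of "-\<sigma>" x]
  by (simp add: algebra_simps)

lemma joint_value_nonneg: "0 \<le> \<sigma> \<Longrightarrow> joint_cost \<sigma> - x * joint_mass \<sigma> = Fint u0 rho0 \<sigma> x t0"
  and joint_value_nonpos: "\<sigma> \<le> 0 \<Longrightarrow> joint_cost \<sigma> - x * joint_mass \<sigma> = Gint ub rhob (-\<sigma>) x t0"
  unfolding joint_value by (simp_all add: Fint_def Gint_def)

lemma continuous_on_joint: "continuous_on UNIV joint_cost" "continuous_on UNIV joint_mass"
proof -
  have reflect: "continuous_on UNIV (\<lambda>\<sigma>. f (- \<sigma>))" if "continuous_on UNIV f" for f :: "real \<Rightarrow> real"
    using continuous_on_compose2[OF that continuous_on_minus[OF continuous_on_id]] by simp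
  show "continuous_on UNIV joint_cost" "continuous_on UNIV joint_mass"
    unfolding joint_cost_def joint_mass_def mass0_def massb_def
    by (intro continuous_on_add continuous_on_diff continuous_on_Fint reflect continuous_on_Gint
        continuous_on_integral_from_0 integrable_rho0 integrable_rhob_ub)+
qed

lemma strict_mono_joint_mass: "strict_mono joint_mass"
proof (rule strict_monoI)
  fix \<sigma> \<sigma>' :: real
  assume "\<sigma> < \<sigma>'"
  show "joint_mass \<sigma> < joint_mass \<sigma>'"
  proof (cases "0 < \<sigma>'")
    case True
    have "mass0 \<sigma> < mass0 \<sigma>'"
      using mass0_strict_mono[of "max \<sigma> 0" \<sigma>'] True \<open>\<sigma> < \<sigma>'\<close>
      by (cases "0 \<le> \<sigma>") (simp_all add: mass0_nonpos)
    moreover have "massb (-\<sigma>') \<le> massb (-\<sigma>)"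
      using massb_strict_mono[of 0 "-\<sigma>"] True by (cases "\<sigma> < 0") (simp_all add: massb_nonpos)
    ultimately show ?thesis
      unfolding joint_mass_def by linarith
  next
    case False
    then show ?thesis
      using massb_strict_mono[of "-\<sigma>'" "-\<sigma>"] \<open>\<sigma> < \<sigma>'\<close>
      by (simp add: joint_mass_def mass0_nonpos)
  qed
qed

lemma Fint_strict_mono_beyond:
  assumes c: "max 0 (x + t0 * u0_bound) \<le> c" and "c < d"
  shows "Fint u0 rho0 c x t0 < Fint u0 rho0 d x t0"
proof -
  have *: "\<eta> - c \<le> t0 * u0 \<eta> + \<eta> - x \<and> 0 < rho0 \<eta>" if "c \<le> \<eta>" for \<eta>
  proof -
    have "- u0_bound \<le> u0 \<eta>"
      using abs_u0_le[of \<eta>] that c by auto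
    then have "t0 * - u0_bound \<le> t0 * u0 \<eta>"
      using t0_pos by (intro mult_left_mono) auto
    then show ?thesis
      using data_pos(1)[of \<eta>] that c by auto
  qed
  show ?thesis
    unfolding Fint_def
  proof (rule integral_from_0_strict_mono[OF integrable_Fint_integrand _ \<open>c < d\<close>])
    show "0 \<le> c"
      using c by simp
    show "0 \<le> (t0 * u0 \<eta> + \<eta> - x) * rho0 \<eta>" if "\<eta> \<in> {c..d}" for \<eta>
      using *[of \<eta>] that by simp
    show "0 < (t0 * u0 \<eta> + \<eta> - x) * rho0 \<eta>" if "\<eta> \<in> {c<..<d}" for \<eta>
      using *[of \<eta>] that by simp
  qed
qed

lemma Gint_strict_mono_beyond:
  assumes "0 \<le> x" "t0 \<le> c" "c < d"
  shows "Gint ub rhob c x t0 < Gint ub rhob d x t0"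
proof -
  have eq: "x - ub \<eta> * (t0 - \<eta>) = x + ub \<eta> * (\<eta> - t0)" for \<eta>
    by (simp add: algebra_simps)
  have *: "0 \<le> x - ub \<eta> * (t0 - \<eta>) \<and> 0 < rhob \<eta> * ub \<eta>" if "t0 \<le> \<eta>" for \<eta>
    using data_pos(2,3)[of \<eta>] that t0_pos \<open>0 \<le> x\<close> unfolding eq by simp
  have **: "0 < x - ub \<eta> * (t0 - \<eta>)" if "t0 < \<eta>" for \<eta>
    using data_pos(2)[of \<eta>] that t0_pos \<open>0 \<le> x\<close> unfolding eq by (simp add: add_nonneg_pos)
  show ?thesis
    unfolding Gint_def
  proof (rule integral_from_0_strict_mono[OF integrable_Gint_integrand _ \<open>c < d\<close>])
    show "0 \<le> c"
      using assms t0_pos by simp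
    show "0 \<le> (x - ub \<eta> * (t0 - \<eta>)) * rhob \<eta> * ub \<eta>" if "\<eta> \<in> {c..d}" for \<eta>
      using *[of \<eta>] that assms by (simp add: mult.assoc)
    show "0 < (x - ub \<eta> * (t0 - \<eta>)) * rhob \<eta> * ub \<eta>" if "\<eta> \<in> {c<..<d}" for \<eta>
      using *[of \<eta>] **[of \<eta>] that assms by (simp add: mult.assoc)
  qed
qed

lemma Gint_0_strict_antimono:
  assumes "0 \<le> c" "c < d" "d \<le> t0"
  shows "Gint ub rhob d 0 t0 < Gint ub rhob c 0 t0"
proof -
  let ?h = "\<lambda>\<eta>. ub \<eta> * (t0 - \<eta>) * rhob \<eta> * ub \<eta>"
  have int: "?h integrable_on {0..y}" for y
    using integrable_neg[OF integrable_Gint_integrand[of 0 y]] by simp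
  have h_pos: "0 \<le> ?h \<eta>" "\<eta> < t0 \<Longrightarrow> 0 < ?h \<eta>" if "c \<le> \<eta>" "\<eta> \<le> t0" for \<eta>
    using data_pos(2,3)[of \<eta>] that assms by (simp_all add: zero_less_mult_iff zero_le_mult_iff)
  have "integral {0..c} ?h < integral {0..d} ?h"
    by (rule integral_from_0_strict_mono[OF int \<open>0 \<le> c\<close> \<open>c < d\<close>]) (use h_pos assms in auto)
  moreover have "Gint ub rhob y 0 t0 = - integral {0..y} ?h" for y
    unfolding Gint_def by (simp add: integral_neg)
  ultimately show ?thesis
    by simp
qed

lemma Fargmin_nonempty: "Fargmin u0 rho0 x t0 \<noteq> {}"
proof -
  obtain y where "0 \<le> y" "\<And>z. 0 \<le> z \<Longrightarrow> Fint u0 rho0 y x t0 \<le> Fint u0 rho0 z x t0"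
    by (rule nonneg_argmin_exists[where Y = "max 0 (x + t0 * u0_bound)", OF continuous_on_Fint])
      (auto intro: Fint_strict_mono_beyond)
  then show ?thesis
    by (auto simp: Fargmin_def)
qed

lemma Fargmin_subset: "Fargmin u0 rho0 x t0 \<subseteq> {0..max 0 (x + t0 * u0_bound)}"
proof
  fix y
  assume "y \<in> Fargmin u0 rho0 x t0"
  then have "0 \<le> y" "y \<le> max 0 (x + t0 * u0_bound)"
    using nonneg_argmin_le[where Y = "max 0 (x + t0 * u0_bound)" and f = "\<lambda>y. Fint u0 rho0 y x t0"]
      Fint_strict_mono_beyond by (auto simp: Fargmin_def)
  then show "y \<in> {0..max 0 (x + t0 * u0_bound)}"
    by simp
qed

lemma Gargmin_nonempty: "0 \<le> x \<Longrightarrow> Gargmin ub rhob x t0 \<noteq> {}"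
proof -
  assume "0 \<le> x"
  obtain \<tau> where "0 \<le> \<tau>" "\<And>s. 0 \<le> s \<Longrightarrow> Gint ub rhob \<tau> x t0 \<le> Gint ub rhob s x t0"
    by (rule nonneg_argmin_exists[where Y = t0, OF continuous_on_Gint])
      (use t0_pos Gint_strict_mono_beyond[OF \<open>0 \<le> x\<close>] in auto)
  then show ?thesis
    by (auto simp: Gargmin_def)
qed

lemma Gargmin_subset: "0 \<le> x \<Longrightarrow> Gargmin ub rhob x t0 \<subseteq> {0..t0}"
proof
  fix \<tau>
  assume "0 \<le> x" "\<tau> \<in> Gargmin ub rhob x t0"
  then have "0 \<le> \<tau>" "\<tau> \<le> t0"
    using nonneg_argmin_le[where Y = t0 and f = "\<lambda>\<tau>. Gint ub rhob \<tau> x t0"]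
      Gint_strict_mono_beyond[OF \<open>0 \<le> x\<close>] t0_pos by (auto simp: Gargmin_def)
  then show "\<tau> \<in> {0..t0}"
    by simp
qed

lemma Fmin_eq: "y \<in> Fargmin u0 rho0 x t0 \<Longrightarrow> Fmin u0 rho0 x t0 = Fint u0 rho0 y x t0"
  unfolding Fmin_def by (rule cInf_eq_minimum) (auto simp: Fargmin_def)

lemma Gmin_eq: "\<tau> \<in> Gargmin ub rhob x t0 \<Longrightarrow> Gmin ub rhob x t0 = Gint ub rhob \<tau> x t0"
  unfolding Gmin_def by (rule cInf_eq_minimum) (auto simp: Gargmin_def)

abbreviation "joint_argmin \<equiv> tilted_argmin joint_cost joint_mass"

lemma joint_argmin_nonneg:
  assumes "0 \<le> x" "\<sigma> \<in> joint_argmin x" "0 \<le> \<sigma>"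
  shows "\<sigma> \<in> Fargmin u0 rho0 x t0" "Fmin u0 rho0 x t0 \<le> Gmin ub rhob x t0"
proof -
  have min: "Fint u0 rho0 \<sigma> x t0 \<le> joint_cost z - x * joint_mass z" for z
    using assms(2,3) by (simp add: tilted_argmin_def joint_value_nonneg)
  have "Fint u0 rho0 \<sigma> x t0 \<le> Fint u0 rho0 z x t0" if "0 \<le> z" for z
    using min[of z] joint_value_nonneg[OF that] by simp
  then show F: "\<sigma> \<in> Fargmin u0 rho0 x t0"
    using \<open>0 \<le> \<sigma>\<close> by (simp add: Fargmin_def)
  obtain \<tau> where \<tau>: "\<tau> \<in> Gargmin ub rhob x t0"
    using Gargmin_nonempty[OF \<open>0 \<le> x\<close>] by blast
  then have "Fint u0 rho0 \<sigma> x t0 \<le> Gint ub rhob \<tau> x t0"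
    using min[of "-\<tau>"] by (simp add: Gargmin_def joint_value_nonpos)
  then show "Fmin u0 rho0 x t0 \<le> Gmin ub rhob x t0"
    using Fmin_eq[OF F] Gmin_eq[OF \<tau>] by simp
qed

lemma joint_argmin_nonpos:
  assumes "0 \<le> x" "\<sigma> \<in> joint_argmin x" "\<sigma> \<le> 0"
  shows "-\<sigma> \<in> Gargmin ub rhob x t0" "Gmin ub rhob x t0 \<le> Fmin u0 rho0 x t0"
proof -
  have min: "Gint ub rhob (-\<sigma>) x t0 \<le> joint_cost z - x * joint_mass z" for z
    using assms(2,3) by (simp add: tilted_argmin_def joint_value_nonpos)
  have "Gint ub rhob (-\<sigma>) x t0 \<le> Gint ub rhob \<tau> x t0" if "0 \<le> \<tau>" for \<tau>
    using min[of "-\<tau>"] joint_value_nonpos[of "-\<tau>"] that by simp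
  then show G: "-\<sigma> \<in> Gargmin ub rhob x t0"
    using \<open>\<sigma> \<le> 0\<close> by (simp add: Gargmin_def)
  obtain y where y: "y \<in> Fargmin u0 rho0 x t0"
    using Fargmin_nonempty by blast
  then have "Gint ub rhob (-\<sigma>) x t0 \<le> Fint u0 rho0 y x t0"
    using min[of y] by (simp add: Fargmin_def joint_value_nonneg)
  then show "Gmin ub rhob x t0 \<le> Fmin u0 rho0 x t0"
    using Fmin_eq[OF y] Gmin_eq[OF G] by simp
qed

lemma joint_argmin_nonempty:
  assumes "0 \<le> x"
  shows "joint_argmin x \<noteq> {}"
proof -
  obtain y \<tau> where y: "y \<in> Fargmin u0 rho0 x t0" and \<tau>: "\<tau> \<in> Gargmin ub rhob x t0"
    using Fargmin_nonempty Gargmin_nonempty[OF assms] by blast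
  have lower: "min (Fint u0 rho0 y x t0) (Gint ub rhob \<tau> x t0)
      \<le> joint_cost z - x * joint_mass z" for z
    using y \<tau> by (cases "0 \<le> z") (auto simp: Fargmin_def Gargmin_def joint_value_nonneg
      joint_value_nonpos min.coboundedI1 min.coboundedI2)
  show ?thesis
  proof (cases "Fint u0 rho0 y x t0 \<le> Gint ub rhob \<tau> x t0")
    case True
    then have "y \<in> joint_argmin x"
      using lower y by (simp add: tilted_argmin_def Fargmin_def joint_value_nonneg min_def)
    then show ?thesis
      by blast
  next
    case False
    then have "-\<tau> \<in> joint_argmin x"
      using lower \<tau> by (simp add: tilted_argmin_def Gargmin_def joint_value_nonpos min_def)
    then show ?thesis
      by blast
  qed
qed

sublocale tilted_minimization joint_cost joint_mass
  using continuous_on_joint strict_mono_joint_mass joint_argmin_nonempty by unfold_locales auto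

lemma joint_argmin_ge: "0 \<le> x \<Longrightarrow> \<sigma> \<in> joint_argmin x \<Longrightarrow> -t0 \<le> \<sigma>"
  using joint_argmin_nonpos(1)[of x \<sigma>] Gargmin_subset[of x] t0_pos by (cases "\<sigma> \<le> 0") auto

lemma joint_argmin_at_0:
  assumes "\<sigma> \<in> joint_argmin 0" "\<sigma> < 0"
  shows "\<sigma> = -t0"
proof -
  have G: "-\<sigma> \<in> Gargmin ub rhob 0 t0"
    using joint_argmin_nonpos(1)[OF _ assms(1)] assms(2) by simp
  then have "Gint ub rhob (-\<sigma>) 0 t0 \<le> Gint ub rhob t0 0 t0"
    using t0_pos by (simp add: Gargmin_def)
  moreover have "-\<sigma> \<le> t0"
    using G Gargmin_subset[of 0] by auto
  ultimately show ?thesis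
    using Gint_0_strict_antimono[of "-\<sigma>" t0] assms(2) by fastforce
qed


section \<open>Characteristic triangles\<close>

abbreviation "Tri x \<equiv> char_triangle u0 ub rho0 rhob x t0"

lemma convex_Tri: "convex (Tri x)"
  by (simp add: char_triangle_def Let_def)

lemma apex_mem_Tri: "0 \<le> x \<Longrightarrow> (x, t0) \<in> Tri x"
  by (auto simp: char_triangle_def Let_def intro: hull_inc)

lemma y_lo_hi_bounds:
  assumes "y \<in> Fargmin u0 rho0 x t0"
  shows "0 \<le> y_lo u0 rho0 x t0" "y_lo u0 rho0 x t0 \<le> y" "y \<le> y_hi u0 rho0 x t0"
  using Inf_Sup_within_bounds[OF assms Fargmin_subset] unfolding y_lo_def y_hi_def by auto

lemma tau_lo_hi_bounds:
  assumes "0 \<le> x" "\<tau> \<in> Gargmin ub rhob x t0"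
  shows "0 \<le> tau_lo ub rhob x t0" "tau_lo ub rhob x t0 \<le> \<tau>" "\<tau> \<le> tau_hi ub rhob x t0"
    "tau_hi ub rhob x t0 \<le> t0"
  using Inf_Sup_within_bounds[OF assms(2) Gargmin_subset[OF assms(1)]]
  unfolding tau_lo_def tau_hi_def by auto

lemma Tri_subset_strip: "0 \<le> x \<Longrightarrow> Tri x \<subseteq> {0..} \<times> {0..t0}"
proof -
  assume "0 \<le> x"
  obtain y \<tau> where y: "y \<in> Fargmin u0 rho0 x t0" and \<tau>: "\<tau> \<in> Gargmin ub rhob x t0"
    using Fargmin_nonempty Gargmin_nonempty[OF \<open>0 \<le> x\<close>] by blast
  obtain y0 where y0: "y0 \<in> Fargmin u0 rho0 0 t0"
    using Fargmin_nonempty by blast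
  have box: "convex ({0::real..} \<times> {0..t0})"
    by (intro convex_Times convex_real_interval)
  have hull: "convex hull P \<subseteq> {0..} \<times> {0..t0}" if "P \<subseteq> {0..} \<times> {0..t0}" for P :: "(real \<times> real) set"
    by (rule hull_minimal[where S = convex, OF that box])
  have "Tri x = convex hull {(x, t0), (y_lo u0 rho0 x t0, 0), (y_hi u0 rho0 x t0, 0)} \<or>
    Tri x = convex hull {(x, t0), (0, tau_lo ub rhob x t0), (0, tau_hi ub rhob x t0)} \<or>
    Tri x = convex hull {(x, t0), (y_hi u0 rho0 x t0, 0), (0, tau_hi ub rhob x t0), (0, 0)} \<or>
    Tri x = convex hull {(0, t0), (0, 0), (y_hi u0 rho0 0 t0, 0)}"
    by (simp add: char_triangle_def Let_def)
  then show ?thesis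
    using y_lo_hi_bounds[OF y] y_lo_hi_bounds[OF y0] tau_lo_hi_bounds[OF \<open>0 \<le> x\<close> \<tau>] \<open>0 \<le> x\<close> t0_pos
    by (elim disjE) (simp_all add: hull)
qed

lemma horizontal_base_mem_Tri:
  assumes "0 \<le> x" "\<sigma>1 \<in> joint_argmin x" "\<sigma>2 \<in> joint_argmin x" "\<sigma>1 \<le> \<sigma>" "\<sigma> \<le> \<sigma>2" "0 \<le> \<sigma>"
  shows "(\<sigma>, 0) \<in> Tri x"
proof -
  have "0 \<le> \<sigma>2"
    using assms by linarith
  then have F2: "\<sigma>2 \<in> Fargmin u0 rho0 x t0" and "Fmin u0 rho0 x t0 \<le> Gmin ub rhob x t0"
    using joint_argmin_nonneg assms(1,3) by auto
  have "\<sigma> \<le> y_hi u0 rho0 x t0"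
    using y_lo_hi_bounds(3)[OF F2] assms(5) by linarith
  then have between: "(\<sigma>, 0) \<in> Tri x" if "(p, 0) \<in> Tri x" "(y_hi u0 rho0 x t0, 0) \<in> Tri x"
    "p \<le> \<sigma>" for p
    using convex_contains_image_between[OF convex_Tri linear_horizontal] that by blast
  consider "Fmin u0 rho0 x t0 < Gmin ub rhob x t0" "0 < x"
    | "Fmin u0 rho0 x t0 < Gmin ub rhob x t0" "x = 0"
    | "Fmin u0 rho0 x t0 = Gmin ub rhob x t0"
    using \<open>0 \<le> x\<close> \<open>Fmin u0 rho0 x t0 \<le> Gmin ub rhob x t0\<close> by fastforce
  then show ?thesis
  proof cases
    case 1
    then have "0 \<le> \<sigma>1"
      using joint_argmin_nonpos(2)[OF assms(1,2)] by fastforce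
    then have "y_lo u0 rho0 x t0 \<le> \<sigma>"
      using y_lo_hi_bounds(2) joint_argmin_nonneg(1) assms(1,2,4) by fastforce
    moreover have "Tri x = convex hull {(x, t0), (y_lo u0 rho0 x t0, 0), (y_hi u0 rho0 x t0, 0)}"
      using 1 by (simp add: char_triangle_def Let_def)
    ultimately show ?thesis
      using between[of "y_lo u0 rho0 x t0"] by (simp add: hull_inc)
  next
    case 2
    then have "Tri x = convex hull {(0, t0), (0, 0), (y_hi u0 rho0 x t0, 0)}"
      by (simp add: char_triangle_def Let_def)
    then show ?thesis
      using between[of 0] \<open>0 \<le> \<sigma>\<close> by (simp add: hull_inc)
  next
    case 3
    then have "Tri x =
        convex hull {(x, t0), (y_hi u0 rho0 x t0, 0), (0, tau_hi ub rhob x t0), (0, 0)}"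
      by (simp add: char_triangle_def Let_def)
    then show ?thesis
      using between[of 0] \<open>0 \<le> \<sigma>\<close> by (simp add: hull_inc)
  qed
qed

lemma vertical_base_mem_Tri:
  assumes "0 \<le> x" "\<sigma>1 \<in> joint_argmin x" "\<sigma>2 \<in> joint_argmin x" "\<sigma>1 \<le> \<sigma>" "\<sigma> \<le> \<sigma>2" "\<sigma> < 0"
  shows "(0, -\<sigma>) \<in> Tri x"
proof -
  have "\<sigma>1 \<le> 0"
    using assms by linarith
  then have G1: "-\<sigma>1 \<in> Gargmin ub rhob x t0" and "Gmin ub rhob x t0 \<le> Fmin u0 rho0 x t0"
    using joint_argmin_nonpos assms(1,2) by auto
  have "-\<sigma> \<le> tau_hi ub rhob x t0"
    using tau_lo_hi_bounds(3)[OF assms(1) G1] assms(4) by linarith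
  then have between: "(0, -\<sigma>) \<in> Tri x" if "(0, p) \<in> Tri x" "(0, tau_hi ub rhob x t0) \<in> Tri x"
    "p \<le> -\<sigma>" for p
    using convex_contains_image_between[OF convex_Tri linear_vertical] that by blast
  consider "Gmin ub rhob x t0 < Fmin u0 rho0 x t0" | "Gmin ub rhob x t0 = Fmin u0 rho0 x t0"
    using \<open>Gmin ub rhob x t0 \<le> Fmin u0 rho0 x t0\<close> by fastforce
  then show ?thesis
  proof cases
    case 1
    then have "\<sigma>2 < 0"
      using joint_argmin_nonneg(2)[OF assms(1,3)] by fastforce
    then have "tau_lo ub rhob x t0 \<le> -\<sigma>"
      using tau_lo_hi_bounds(2)[OF assms(1)] joint_argmin_nonpos(1)[OF assms(1,3)] assms(5)
      by fastforce
    moreover have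
      "Tri x = convex hull {(x, t0), (0, tau_lo ub rhob x t0), (0, tau_hi ub rhob x t0)}"
      using 1 by (simp add: char_triangle_def Let_def)
    ultimately show ?thesis
      using between[of "tau_lo ub rhob x t0"] by (simp add: hull_inc)
  next
    case 2
    then have "Tri x =
        convex hull {(x, t0), (y_hi u0 rho0 x t0, 0), (0, tau_hi ub rhob x t0), (0, 0)}"
      by (simp add: char_triangle_def Let_def)
    then show ?thesis
      using between[of 0] \<open>\<sigma> < 0\<close> by (simp add: hull_inc)
  qed
qed

lemma base_point_mem_Tri:
  assumes "0 \<le> x" "\<sigma>1 \<in> joint_argmin x" "\<sigma>2 \<in> joint_argmin x" "\<sigma>1 \<le> \<sigma>" "\<sigma> \<le> \<sigma>2"
  shows "base_point \<sigma> \<in> Tri x"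
  using horizontal_base_mem_Tri[OF assms] vertical_base_mem_Tri[OF assms]
  by (simp add: base_point_def)

lemma Tri_covers_strip:
  assumes "0 \<le> a" "0 \<le> s" "s \<le> t0"
  obtains x where "0 \<le> x" "(a, s) \<in> Tri x"
proof (cases "s = t0")
  case True
  then show ?thesis
    using that apex_mem_Tri \<open>0 \<le> a\<close> by blast
next
  case False
  then have "s < t0"
    using assms by simp
  have "(\<exists>\<sigma> \<in> joint_argmin 0. 0 \<le> \<sigma> \<and> side t0 a s 0 \<sigma> \<le> 0) \<or>
    (\<exists>x\<ge>0. \<exists>\<sigma>1 \<in> joint_argmin x. \<exists>\<sigma>2 \<in> joint_argmin x. \<exists>\<sigma>.
      \<sigma>1 \<le> \<sigma> \<and> \<sigma> \<le> \<sigma>2 \<and> -s \<le> \<sigma> \<and> side t0 a s x \<sigma> = 0)"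
    by (rule argmin_side_crossing) (use joint_argmin_ge joint_argmin_at_0 assms \<open>s < t0\<close> in auto)
  then show ?thesis
  proof (elim disjE bexE exE conjE)
    fix \<sigma>
    assume \<sigma>: "\<sigma> \<in> joint_argmin 0" "0 \<le> \<sigma>" "side t0 a s 0 \<sigma> \<le> 0"
    have "(0, 0) \<in> Tri 0"
      using joint_argmin_nonneg(2)[of 0 \<sigma>] \<sigma>
      by (auto simp: char_triangle_def Let_def intro: hull_inc)
    moreover have "(\<sigma>, 0) \<in> Tri 0"
      using horizontal_base_mem_Tri[of 0 \<sigma> \<sigma> \<sigma>] \<sigma> by simp
    ultimately have "(a, s) \<in> Tri 0"
      using mem_convex_if_side_nonpos_at_0[OF convex_Tri apex_mem_Tri[of 0]] \<sigma> assms \<open>s < t0\<close>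
      by simp
    then show ?thesis
      using that by blast
  next
    fix x \<sigma>1 \<sigma>2 \<sigma>
    assume "0 \<le> x" "\<sigma>1 \<in> joint_argmin x" "\<sigma>2 \<in> joint_argmin x" "\<sigma>1 \<le> \<sigma>" "\<sigma> \<le> \<sigma>2"
      and \<sigma>: "-s \<le> \<sigma>" "side t0 a s x \<sigma> = 0"
    then have "(a, s) \<in> Tri x"
      using mem_convex_if_side_zero[OF convex_Tri apex_mem_Tri base_point_mem_Tri]
        assms \<open>s < t0\<close> by blast
    then show ?thesis
      using that \<open>0 \<le> x\<close> by blast
  qed
qed

end

theorem lemma2p13:
  fixes u0 ub rho0 rhob :: "real \<Rightarrow> real" and t0 :: real
  assumes u0_meas: "set_borel_measurable borel {0..} u0"
      and u0_bdd: "\<exists>M. \<forall>x\<ge>0. \<bar>u0 x\<bar> \<le> M"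
      and ub_meas: "set_borel_measurable borel {0..} ub"
      and ub_bdd: "\<exists>M. \<forall>x\<ge>0. \<bar>ub x\<bar> \<le> M"
      and ub_pos: "\<forall>x\<ge>0. ub x > 0"
      and rho0_meas: "set_borel_measurable borel {0..} rho0"
      and rho0_pos: "\<forall>x\<ge>0. rho0 x > 0"
      and rho0_locbdd: "\<forall>b\<ge>0. \<exists>M. \<forall>x\<in>{0..b}. \<bar>rho0 x\<bar> \<le> M"
      and rhob_meas: "set_borel_measurable borel {0..} rhob"
      and rhob_pos: "\<forall>x\<ge>0. rhob x > 0"
      and rhob_locbdd: "\<forall>b\<ge>0. \<exists>M. \<forall>x\<in>{0..b}. \<bar>rhob x\<bar> \<le> M"
      and t0_pos: "t0 > 0"
  shows "(\<Union>x\<in>{0..}. char_triangle u0 ub rho0 rhob x t0) = {(x, t). 0 \<le> x \<and> 0 \<le> t \<and> t \<le> t0}"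
proof -
  interpret initial_boundary_data u0 ub rho0 rhob t0
    using assms by unfold_locales
  show ?thesis
  proof (rule subset_antisym)
    show "(\<Union>x\<in>{0..}. Tri x) \<subseteq> {(x, t). 0 \<le> x \<and> 0 \<le> t \<and> t \<le> t0}"
      using Tri_subset_strip by fastforce
    show "{(x, t). 0 \<le> x \<and> 0 \<le> t \<and> t \<le> t0} \<subseteq> (\<Union>x\<in>{0..}. Tri x)"
      using Tri_covers_strip by fastforce
  qed
qed

end
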